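(* Let $B$ be a blueprint and let $I\subseteq B$ be an ideal of $B$ that contains all absorbing elements of $B$. Then $\sim_I$ is a congruence on $B$, its absorbing ideal $I_{\sim_I}$ equals $I$, and $\sim_I$ is the smallest congruence on $B$ whose absorbing ideal is $I$.
   Context: A monoid is a commutative semigroup $A$, written multiplicatively, with neutral element $1$. For a monoid $A$, $\mathbb N[A]$ denotes the semiring of finite formal sums $\sum a_i$ of elements $a_i\in A$ (repetitions allowed), with empty sum $\underline0$ and multiplication extended bilinearly from $A$. A pre-addition on $A$ is a relation $\mathcal R\subseteq\mathbb N[A]\times\mathbb N[A]$, written $\sum a_i\equiv\sum b_j$, which is an equivalence relation and satisfies: if $\sum a_i\equiv\sum b_j$ and $\sum c_k\equiv\sum d_l$, then $\sum a_i+\sum c_k\equiv\sum b_j+\sum d_l$ and $\sum_{i,k}a_ic_k\equiv\sum_{j,l}b_jd_l$. A blueprint $B=(A,\mathcal R)$ is a monoid $A$ with a pre-addition $\mathcal R$; we write $a\in B$ for $a\in A$. An element $e$ with $e\equiv\underline0$ is a zero of $B$; an element $e$ with $eb\equiv e$ for all $b\in B$ is an absorbing element. For an equivalence relation $\sim$ on $A$, its linear extension $\sim_{\mathbb N}$ is the equivalence relation on $\mathbb N[A]$ generated by $\sum_{i=1}^n a_i\sim_{\mathbb N}\sum_{i=1}^n b_i$ whenever $a_i\sim b_i$ for all $i$; and $\sim_{\mathcal R}$ is the smallest equivalence relation on $\mathbb N[A]$ containing both $\mathcal R$ and $\sim_{\mathbb N}$. A congruence on $B$ is an equivalence relation $\sim$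 on $A$ such that (C1) $\sim_{\mathbb N}$ is a pre-addition on $A$, and (C2) the restriction of $\sim_{\mathcal R}$ to $A$ equals $\sim$. The absorbing ideal of a congruence $\sim$ is $I_\sim=\{e\in B: eb\sim e\text{ for all }b\in B\}$. For a subset $I\subseteq B$, let $\sim^I$ be the equivalence relation on $A$ with $a\sim^I b$ iff $a=b$ or $a,b\in I$, and let $\sim_I$ be the relation on $A$ with $a\sim_I b$ iff there is a finite sequence $a\equiv\sum_k c_{1,k}\sim^I_{\mathbb N}\sum_k d_{1,k}\equiv\sum_k c_{2,k}\sim^I_{\mathbb N}\cdots\sim^I_{\mathbb N}\sum_k d_{n,k}\equiv b$ with $c_{i,k},d_{i,k}\in A$ (equivalently, $\sim_I$ is the restriction of $(\sim^I)_{\mathcal R}$ to $A$). An ideal of $B$ is a subset $I\subseteq B$ such that (I1) $ab\in I$ for all $a\in I$, $b\in B$; (I2) every zero of $B$ lies in $I$; (I3) if $a\sim_I b$ and $b\in I$, then $a\in I$. *)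

theory Defs
  imports "HOL-Library.Multiset"
begin

text \<open>The monoid A is the carrier type 'a (class comm_monoid_mult).
  N[A] is modelled by 'a multiset (finite formal sums, repetitions allowed),
  with empty sum {#} and sum (+).\<close>

definition msum_mult :: "'a::comm_monoid_mult multiset \<Rightarrow> 'a multiset \<Rightarrow> 'a multiset" where
  "msum_mult M N = (\<Sum>a\<in>#M. image_mset (\<lambda>c. a * c) N)"

definition pre_addition :: "('a::comm_monoid_mult multiset \<times> 'a multiset) set \<Rightarrow> bool" where
  "pre_addition R \<longleftrightarrow> equiv UNIV R \<and>
     (\<forall>M1 N1 M2 N2. (M1, N1) \<in> R \<longrightarrow> (M2, N2) \<in> R \<longrightarrow>
        (M1 + M2, N1 + N2) \<in> R \<and> (msum_mult M1 M2, msum_mult N1 N2) \<in> R)"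

definition is_zero :: "('a::comm_monoid_mult multiset \<times> 'a multiset) set \<Rightarrow> 'a \<Rightarrow> bool" where
  "is_zero R e \<longleftrightarrow> ({#e#}, {#}) \<in> R"

definition is_absorbing :: "('a::comm_monoid_mult multiset \<times> 'a multiset) set \<Rightarrow> 'a \<Rightarrow> bool" where
  "is_absorbing R e \<longleftrightarrow> (\<forall>b. ({#e * b#}, {#e#}) \<in> R)"

definition lin_ext :: "('a \<times> 'a) set \<Rightarrow> ('a multiset \<times> 'a multiset) set" where
  "lin_ext S = (let G = {(M, N). rel_mset (\<lambda>a b. (a, b) \<in> S) M N} in (G \<union> G\<inverse>)\<^sup>*)"

definition sim_R :: "('a multiset \<times> 'a multiset) set \<Rightarrow> ('a \<times> 'a) set \<Rightarrow> ('a multiset \<times> 'a multiset) set" where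
  "sim_R R S = (let G = R \<union> lin_ext S in (G \<union> G\<inverse>)\<^sup>*)"

definition congruence_bp :: "('a::comm_monoid_mult multiset \<times> 'a multiset) set \<Rightarrow> ('a \<times> 'a) set \<Rightarrow> bool" where
  "congruence_bp R S \<longleftrightarrow> equiv UNIV S \<and> pre_addition (lin_ext S) \<and>
     {(a, b). ({#a#}, {#b#}) \<in> sim_R R S} = S"

definition absorbing_ideal :: "('a::comm_monoid_mult \<times> 'a) set \<Rightarrow> 'a set" where
  "absorbing_ideal S = {e. \<forall>b. (e * b, e) \<in> S}"

definition sim_sup :: "'a set \<Rightarrow> ('a \<times> 'a) set" where
  "sim_sup I = {(a, b). a = b \<or> (a \<in> I \<and> b \<in> I)}"

text \<open>sim_I: restriction of (sim^I)_R to A.\<close>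
definition sim_sub :: "('a multiset \<times> 'a multiset) set \<Rightarrow> 'a set \<Rightarrow> ('a \<times> 'a) set" where
  "sim_sub R I = {(a, b). ({#a#}, {#b#}) \<in> sim_R R (sim_sup I)}"

definition bp_ideal :: "('a::comm_monoid_mult multiset \<times> 'a multiset) set \<Rightarrow> 'a set \<Rightarrow> bool" where
  "bp_ideal R I \<longleftrightarrow>
     (\<forall>a b. a \<in> I \<longrightarrow> a * b \<in> I) \<and>
     (\<forall>e. is_zero R e \<longrightarrow> e \<in> I) \<and>
     (\<forall>a b. (a, b) \<in> sim_sub R I \<longrightarrow> b \<in> I \<longrightarrow> a \<in> I)"

end

theory Submission
  imports Defs
begin

(* Both lin_ext and sim_R are equivalence closures (G \<union> G^-1)^*, so the proof rests
   on one principle: a map sending generating pairs into an equivalence relation E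
   sends the whole closure into E.
   Key observation: since sim^I is multiplicatively closed, the linear extension of
   sim_I already lies in sim_R R (sim^I); hence sim_R R sim_I = sim_R R sim^I, which
   gives the congruence property (C2) at once.  The absorbing ideal of sim_I is I by
   the ideal axioms (I1), (I3) (and the absorbing-element hypothesis when I = {}),
   and minimality holds because any congruence with absorbing ideal I contains sim^I
   and therefore everything it generates. *)

lemma equiv_UNIV_refl: "equiv UNIV E \<Longrightarrow> (a, a) \<in> E"
  unfolding equiv_def refl_on_def by blast

lemma equiv_UNIV_sym: "equiv UNIV E \<Longrightarrow> (a, b) \<in> E \<Longrightarrow> (b, a) \<in> E"
  unfolding equiv_def sym_def by blast

lemma equiv_UNIV_trans: "equiv UNIV E \<Longrightarrow> (a, b) \<in> E \<Longrightarrow> (b, c) \<in> E \<Longrightarrow> (a, c) \<in> E"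
  unfolding equiv_def trans_def by blast

definition equiv_closure :: "('b \<times> 'b) set \<Rightarrow> ('b \<times> 'b) set" where
  "equiv_closure G = (G \<union> G\<inverse>)\<^sup>*"

lemma equiv_closure_equiv: "equiv UNIV (equiv_closure G)"
  unfolding equiv_closure_def equiv_def
  by (auto simp: refl_rtrancl sym_Un_converse intro: sym_rtrancl trans_rtrancl)

lemma equiv_closure_base: "G \<subseteq> equiv_closure G"
  unfolding equiv_closure_def by auto

lemma equiv_closure_mono: "G \<subseteq> H \<Longrightarrow> equiv_closure G \<subseteq> equiv_closure H"
  unfolding equiv_closure_def by (intro rtrancl_mono) blast

lemma equiv_closure_map:
  assumes "(M, N) \<in> equiv_closure G"
    and E: "equiv UNIV E"
    and gen: "\<And>x y. (x, y) \<in> G \<Longrightarrow> (f x, f y) \<in> E"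
  shows "(f M, f N) \<in> E"
  using assms(1) unfolding equiv_closure_def
proof (induction rule: rtrancl_induct)
  case base
  show ?case using E by (rule equiv_UNIV_refl)
next
  case (step y z)
  from step.hyps(2) have "(f y, f z) \<in> E"
    using gen equiv_UNIV_sym[OF E] by blast
  with step.IH show ?case by (rule equiv_UNIV_trans[OF E])
qed

lemma equiv_closure_least:
  assumes "equiv UNIV E" and "G \<subseteq> E"
  shows "equiv_closure G \<subseteq> E"
proof safe
  fix M N assume "(M, N) \<in> equiv_closure G"
  then have "(id M, id N) \<in> E"
    by (rule equiv_closure_map) (use assms in auto)
  then show "(M, N) \<in> E" by simp
qed

section \<open>Lifting relations to multisets\<close>

text \<open>Induction over a proof of rel_mset P M N with the relation P kept fixed (the library
  rule rel_mset_induct generalizes P, losing its concrete form).\<close>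

lemma rel_mset_fixed_induct[consumes 1, case_names empty add]:
  assumes "rel_mset P M N" and "Q {#} {#}"
    and "\<And>a b M N. P a b \<Longrightarrow> rel_mset P M N \<Longrightarrow> Q M N \<Longrightarrow> Q (add_mset a M) (add_mset b N)"
  shows "Q M N"
  using assms(1)
proof (induction M arbitrary: N)
  case empty
  then show ?case using assms(2) by simp
next
  case (add a M)
  obtain b N' where "N = add_mset b N'" "P a b" "rel_mset P M N'"
    using msed_rel_invL[OF add.prems] by blast
  then show ?case using add.IH assms(3) by blast
qed

lemma rel_mset_union:
  "rel_mset P M N \<Longrightarrow> rel_mset P K L \<Longrightarrow> rel_mset P (M + K) (N + L)"
  by (induction rule: rel_mset_induct) (auto simp: rel_mset_Plus)

lemma rel_mset_single: "P a b \<Longrightarrow> rel_mset P {#a#} {#b#}"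
  by (simp add: rel_mset_Plus rel_mset_Zero)

lemma rel_mset_image:
  "rel_mset P M N \<Longrightarrow> (\<And>a b. P a b \<Longrightarrow> Q (f a) (f b))
    \<Longrightarrow> rel_mset Q (image_mset f M) (image_mset f N)"
  by (induction rule: rel_mset_induct) (auto simp: rel_mset_Zero rel_mset_Plus)

lemma rel_mset_msum_mult_left:
  assumes "rel_mset P M N" and "\<And>a b c. P a b \<Longrightarrow> P (a * c) (b * c)"
  shows "rel_mset P (msum_mult M K) (msum_mult N K)"
  using assms(1)
proof (induction rule: rel_mset_fixed_induct)
  case (add a b M N)
  have "rel_mset P (image_mset (\<lambda>c. a * c) K) (image_mset (\<lambda>c. b * c) K)"
    using assms(2)[OF add.hyps(1)]
    by (induction K) (auto simp: rel_mset_Zero rel_mset_Plus)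
  with add show ?case by (simp add: msum_mult_def rel_mset_union)
qed (simp add: msum_mult_def)

lemma rel_mset_msum_mult_right:
  assumes "rel_mset P M N" and "\<And>a b c. P a b \<Longrightarrow> P (c * a) (c * b)"
  shows "rel_mset P (msum_mult K M) (msum_mult K N)"
proof (induction K)
  case (add a K)
  have "rel_mset P (image_mset (\<lambda>c. a * c) M) (image_mset (\<lambda>c. a * c) N)"
    using assms by (auto intro: rel_mset_image)
  with add show ?case by (simp add: msum_mult_def rel_mset_union)
qed (simp add: msum_mult_def rel_mset_Zero)

lemma msum_mult_single: "msum_mult {#c#} M = image_mset (\<lambda>x. c * x) M"
  by (simp add: msum_mult_def)

section \<open>The linear extension\<close>

lemma lin_ext_eq:
  "lin_ext S = equiv_closure {(M, N). rel_mset (\<lambda>a b. (a, b) \<in> S) M N}"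
  unfolding lin_ext_def equiv_closure_def Let_def ..

lemma lin_ext_equiv: "equiv UNIV (lin_ext S)"
  unfolding lin_ext_eq by (rule equiv_closure_equiv)

lemma lin_ext_rel: "rel_mset (\<lambda>a b. (a, b) \<in> S) M N \<Longrightarrow> (M, N) \<in> lin_ext S"
  unfolding lin_ext_eq by (rule subsetD[OF equiv_closure_base]) simp

lemma lin_ext_single: "(a, b) \<in> S \<Longrightarrow> ({#a#}, {#b#}) \<in> lin_ext S"
  by (intro lin_ext_rel rel_mset_single)

lemma lin_ext_map:
  assumes "(M, N) \<in> lin_ext S"
    and "\<And>x y. rel_mset (\<lambda>a b. (a, b) \<in> S) x y
      \<Longrightarrow> rel_mset (\<lambda>a b. (a, b) \<in> S') (f x) (f y)"
  shows "(f M, f N) \<in> lin_ext S'"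
  using assms(1) unfolding lin_ext_eq[of S]
proof (rule equiv_closure_map[OF _ lin_ext_equiv])
  fix x y assume "(x, y) \<in> {(M, N). rel_mset (\<lambda>a b. (a, b) \<in> S) M N}"
  then show "(f x, f y) \<in> lin_ext S'" by (intro lin_ext_rel assms(2)) simp
qed

lemma lin_ext_mono:
  assumes "S \<subseteq> S'"
  shows "lin_ext S \<subseteq> lin_ext S'"
proof safe
  fix M N assume "(M, N) \<in> lin_ext S"
  then have "(id M, id N) \<in> lin_ext S'"
    by (rule lin_ext_map) (use assms in \<open>auto elim: multiset.rel_mono_strong\<close>)
  then show "(M, N) \<in> lin_ext S'" by simp
qed

lemma lin_ext_Id: "lin_ext Id = Id"
proof -
  have generators: "{(M, N). rel_mset (\<lambda>a b. (a, b) \<in> Id) M N} = Id"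
    by (auto simp: multiset.rel_eq)
  show ?thesis unfolding lin_ext_eq equiv_closure_def generators by simp
qed

lemma lin_ext_add:
  assumes refl: "\<And>a. (a, a) \<in> S"
    and "(M1, N1) \<in> lin_ext S" "(M2, N2) \<in> lin_ext S"
  shows "(M1 + M2, N1 + N2) \<in> lin_ext S"
proof -
  have rel_refl: "rel_mset (\<lambda>a b. (a, b) \<in> S) K K" for K
    using refl by (rule multiset.rel_refl)
  have "(M1 + M2, N1 + M2) \<in> lin_ext S"
    by (rule lin_ext_map[OF assms(2), where f = "\<lambda>X. X + M2"]) (auto intro: rel_mset_union rel_refl)
  moreover have "(N1 + M2, N1 + N2) \<in> lin_ext S"
    by (rule lin_ext_map[OF assms(3), where f = "\<lambda>X. N1 + X"]) (auto intro: rel_mset_union rel_refl)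
  ultimately show ?thesis by (rule equiv_UNIV_trans[OF lin_ext_equiv])
qed

lemma lin_ext_mult:
  fixes S :: "('a::comm_monoid_mult \<times> 'a) set"
  assumes mult: "\<And>a b c. (a, b) \<in> S \<Longrightarrow> (c * a, c * b) \<in> S"
    and "(M1, N1) \<in> lin_ext S" "(M2, N2) \<in> lin_ext S"
  shows "(msum_mult M1 M2, msum_mult N1 N2) \<in> lin_ext S"
proof -
  have mult_right: "(a * c, b * c) \<in> S" if "(a, b) \<in> S" for a b c
    using mult[OF that, of c] by (simp add: mult.commute)
  have "(msum_mult M1 M2, msum_mult N1 M2) \<in> lin_ext S"
    by (rule lin_ext_map[OF assms(2), where f = "\<lambda>X. msum_mult X M2"])
      (auto intro: rel_mset_msum_mult_left mult_right)
  moreover have "(msum_mult N1 M2, msum_mult N1 N2) \<in> lin_ext S"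
    by (rule lin_ext_map[OF assms(3), where f = "\<lambda>X. msum_mult N1 X"])
      (auto intro: rel_mset_msum_mult_right mult)
  ultimately show ?thesis by (rule equiv_UNIV_trans[OF lin_ext_equiv])
qed

lemma pre_addition_lin_ext:
  assumes "equiv UNIV S" and "\<And>a b c. (a, b) \<in> S \<Longrightarrow> (c * a, c * b) \<in> S"
  shows "pre_addition (lin_ext S)"
  unfolding pre_addition_def
  using lin_ext_equiv lin_ext_add[OF equiv_UNIV_refl[OF assms(1)]] lin_ext_mult[OF assms(2)]
  by blast

lemma sim_R_eq: "sim_R R T = equiv_closure (R \<union> lin_ext T)"
  unfolding sim_R_def equiv_closure_def Let_def ..

lemma sim_R_equiv: "equiv UNIV (sim_R R T)"
  unfolding sim_R_eq by (rule equiv_closure_equiv)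

lemma sim_R_R: "R \<subseteq> sim_R R T" and sim_R_lin: "lin_ext T \<subseteq> sim_R R T"
  unfolding sim_R_eq by (rule subset_trans[OF _ equiv_closure_base], blast)+

lemma sim_R_map:
  assumes "(M, N) \<in> sim_R R T"
    and "\<And>x y. (x, y) \<in> R \<Longrightarrow> (f x, f y) \<in> sim_R R' T'"
    and "\<And>x y. (x, y) \<in> lin_ext T \<Longrightarrow> (f x, f y) \<in> sim_R R' T'"
  shows "(f M, f N) \<in> sim_R R' T'"
  using assms(1) unfolding sim_R_eq[of R T]
  by (rule equiv_closure_map[OF _ sim_R_equiv]) (use assms(2,3) in blast)

lemma sim_R_mono: "lin_ext T \<subseteq> lin_ext T' \<Longrightarrow> sim_R R T \<subseteq> sim_R R T'"
  unfolding sim_R_eq by (rule equiv_closure_mono) blast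

lemma sim_R_Id: "equiv UNIV R \<Longrightarrow> sim_R R Id \<subseteq> R"
  unfolding sim_R_eq lin_ext_Id
  by (rule equiv_closure_least) (auto intro: equiv_UNIV_refl)

lemma sim_R_add_right:
  assumes pa: "pre_addition R" and refl: "\<And>a. (a, a) \<in> T" and "(M, N) \<in> sim_R R T"
  shows "(M + K, N + K) \<in> sim_R R T"
proof (rule sim_R_map[OF assms(3)])
  have eR: "equiv UNIV R" using pa unfolding pre_addition_def by simp
  show "(x + K, y + K) \<in> sim_R R T" if "(x, y) \<in> R" for x y
    using that pa equiv_UNIV_refl[OF eR] sim_R_R unfolding pre_addition_def by blast
  show "(x + K, y + K) \<in> sim_R R T" if "(x, y) \<in> lin_ext T" for x y
    using lin_ext_add[OF refl that equiv_UNIV_refl[OF lin_ext_equiv]] sim_R_lin by blast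
qed

lemma sim_R_add:
  assumes pa: "pre_addition R" and refl: "\<And>a. (a, a) \<in> T"
    and "(M1, N1) \<in> sim_R R T" "(M2, N2) \<in> sim_R R T"
  shows "(M1 + M2, N1 + N2) \<in> sim_R R T"
proof -
  have "(M1 + M2, N1 + M2) \<in> sim_R R T" by (rule sim_R_add_right[OF pa refl assms(3)])
  moreover have "(M2 + N1, N2 + N1) \<in> sim_R R T" by (rule sim_R_add_right[OF pa refl assms(4)])
  ultimately show ?thesis by (simp add: add.commute equiv_UNIV_trans[OF sim_R_equiv])
qed

lemma sim_R_scale:
  assumes pa: "pre_addition R" and mult: "\<And>a b. (a, b) \<in> T \<Longrightarrow> (c * a, c * b) \<in> T"
    and "(M, N) \<in> sim_R R T"
  shows "(image_mset (\<lambda>x. c * x) M, image_mset (\<lambda>x. c * x) N) \<in> sim_R R T"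
proof (rule sim_R_map[OF assms(3)])
  have eR: "equiv UNIV R" using pa unfolding pre_addition_def by simp
  show "(image_mset (\<lambda>x. c * x) x, image_mset (\<lambda>x. c * x) y) \<in> sim_R R T"
    if "(x, y) \<in> R" for x y
    using that pa equiv_UNIV_refl[OF eR] sim_R_R
    unfolding pre_addition_def msum_mult_single[symmetric] by blast
  show "(image_mset (\<lambda>x. c * x) x, image_mset (\<lambda>x. c * x) y) \<in> sim_R R T"
    if "(x, y) \<in> lin_ext T" for x y
  proof -
    have "(image_mset (\<lambda>x. c * x) x, image_mset (\<lambda>x. c * x) y) \<in> lin_ext T"
      using that by (rule lin_ext_map) (auto intro: rel_mset_image mult)
    then show ?thesis using sim_R_lin by blast
  qed
qed

lemma lin_ext_subset_sim_R:
  assumes pa: "pre_addition R" and refl: "\<And>a. (a, a) \<in> T"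
    and single: "\<And>a b. (a, b) \<in> S \<Longrightarrow> ({#a#}, {#b#}) \<in> sim_R R T"
  shows "lin_ext S \<subseteq> sim_R R T"
  unfolding lin_ext_eq
proof (rule equiv_closure_least[OF sim_R_equiv], safe)
  fix M N assume "rel_mset (\<lambda>a b. (a, b) \<in> S) M N"
  then show "(M, N) \<in> sim_R R T"
  proof (induction rule: rel_mset_fixed_induct)
    case empty
    show ?case using sim_R_equiv by (rule equiv_UNIV_refl)
  next
    case (add a b M N)
    have "({#a#} + M, {#b#} + N) \<in> sim_R R T"
      using add by (intro sim_R_add[OF pa refl] single) auto
    then show ?case by simp
  qed
qed

section \<open>The congruence sim_I of an ideal\<close>

lemma sim_sup_refl: "(a, a) \<in> sim_sup I"
  by (simp add: sim_sup_def)

lemma sim_sup_mult: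
  fixes a b c :: "'a::comm_monoid_mult"
  assumes I_mult: "\<And>a b. a \<in> I \<Longrightarrow> a * b \<in> I" and "(a, b) \<in> sim_sup I"
  shows "(c * a, c * b) \<in> sim_sup I"
  using assms(2) I_mult[of a c] I_mult[of b c] by (auto simp: sim_sup_def mult.commute[of c])

lemma sim_sub_iff: "(a, b) \<in> sim_sub R I \<longleftrightarrow> ({#a#}, {#b#}) \<in> sim_R R (sim_sup I)"
  by (simp add: sim_sub_def)

lemma sim_sup_subset_sim_sub: "sim_sup I \<subseteq> sim_sub R I"
proof (rule subrelI)
  fix a b assume "(a, b) \<in> sim_sup I"
  then show "(a, b) \<in> sim_sub R I"
    unfolding sim_sub_iff by (rule subsetD[OF sim_R_lin lin_ext_single])
qed

lemma sim_sub_equiv: "equiv UNIV (sim_sub R I)"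
proof (rule equivI)
  show "sim_sub R I \<subseteq> UNIV \<times> UNIV" by simp
  show "refl (sim_sub R I)"
    by (rule refl_onI) (auto simp: sim_sub_iff equiv_UNIV_refl[OF sim_R_equiv])
  show "sym (sim_sub R I)"
    by (rule symI) (simp add: sim_sub_iff equiv_UNIV_sym[OF sim_R_equiv])
  show "trans (sim_sub R I)"
    by (rule transI) (meson sim_sub_iff equiv_UNIV_trans[OF sim_R_equiv])
qed

lemma sim_sub_mult:
  assumes "pre_addition R" and "\<And>a b. a \<in> I \<Longrightarrow> a * b \<in> I" and "(a, b) \<in> sim_sub R I"
  shows "(c * a, c * b) \<in> sim_sub R I"
  using sim_R_scale[OF assms(1) sim_sup_mult[OF assms(2)], where c = c and M = "{#a#}" and N = "{#b#}"] assms(3)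
  by (simp add: sim_sub_iff)

lemma sim_R_sim_sub:
  assumes pa: "pre_addition R" and I_mult: "\<And>a b. a \<in> I \<Longrightarrow> a * b \<in> I"
  shows "sim_R R (sim_sub R I) = sim_R R (sim_sup I)"
proof
  have "lin_ext (sim_sub R I) \<subseteq> sim_R R (sim_sup I)"
    by (rule lin_ext_subset_sim_R[OF pa sim_sup_refl]) (simp add: sim_sub_iff)
  then show "sim_R R (sim_sub R I) \<subseteq> sim_R R (sim_sup I)"
    unfolding sim_R_eq[of R "sim_sub R I"]
    by (intro equiv_closure_least[OF sim_R_equiv] Un_least sim_R_R)
  show "sim_R R (sim_sup I) \<subseteq> sim_R R (sim_sub R I)"
    by (intro sim_R_mono lin_ext_mono sim_sup_subset_sim_sub)
qed

lemma sim_sub_congruence: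
  assumes "pre_addition R" and "\<And>a b. a \<in> I \<Longrightarrow> a * b \<in> I"
  shows "congruence_bp R (sim_sub R I)"
proof -
  have "{(a, b). ({#a#}, {#b#}) \<in> sim_R R (sim_sub R I)} = sim_sub R I"
    by (auto simp: sim_sub_iff sim_R_sim_sub[OF assms])
  then show ?thesis
    unfolding congruence_bp_def
    using sim_sub_equiv pre_addition_lin_ext[OF sim_sub_equiv sim_sub_mult[OF assms]] by blast
qed

text \<open>Every element of I is absorbing for sim_I by (I1); conversely an element e that is
  absorbing for sim_I satisfies e sim_I e * i in I for any i in I, so e is in I by (I3).
  If I is empty then sim_I is the restriction of R, and e is absorbing in the blueprint.\<close>

lemma absorbing_ideal_sim_sub:
  assumes pa: "pre_addition R" and ideal: "bp_ideal R I"
    and absorbing: "{e. is_absorbing R e} \<subseteq> I"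
  shows "absorbing_ideal (sim_sub R I) = I"
proof -
  have I_mult: "\<And>a b. a \<in> I \<Longrightarrow> a * b \<in> I"
    and I_closed: "\<And>a b. (a, b) \<in> sim_sub R I \<Longrightarrow> b \<in> I \<Longrightarrow> a \<in> I"
    using ideal unfolding bp_ideal_def by blast+
  have "e \<in> absorbing_ideal (sim_sub R I)" if "e \<in> I" for e
  proof -
    have "(e * b, e) \<in> sim_sup I" for b
      using I_mult[OF that] that by (simp add: sim_sup_def)
    then show ?thesis
      using sim_sup_subset_sim_sub unfolding absorbing_ideal_def by blast
  qed
  moreover have "e \<in> I" if "e \<in> absorbing_ideal (sim_sub R I)" for e
  proof -
    from that have e_abs: "(e * b, e) \<in> sim_sub R I" for b
      by (simp add: absorbing_ideal_def)
    show "e \<in> I"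
    proof (cases "I = {}")
      case False
      then obtain i where "i \<in> I" by blast
      then have "e * i \<in> I" using I_mult[of i e] by (simp add: mult.commute)
      moreover have "(e, e * i) \<in> sim_sub R I"
        using sim_sub_equiv e_abs[of i] by (rule equiv_UNIV_sym)
      ultimately show ?thesis by (rule I_closed[rotated])
    next
      case True
      then have "sim_sup I = Id" by (auto simp: sim_sup_def)
      moreover have "sim_R R Id \<subseteq> R"
        using pa unfolding pre_addition_def by (simp add: sim_R_Id)
      ultimately have "({#e * b#}, {#e#}) \<in> R" for b
        using e_abs[of b] unfolding sim_sub_iff by (simp add: subsetD)
      then have "is_absorbing R e" by (simp add: is_absorbing_def)
      then show ?thesis using absorbing by blast
    qed
  qed
  ultimately show ?thesis by blast
qed

lemma sim_sup_subset_congruence: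
  assumes "equiv UNIV S" and "I \<subseteq> absorbing_ideal S"
  shows "sim_sup I \<subseteq> S"
proof safe
  fix a b assume "(a, b) \<in> sim_sup I"
  then consider "a = b" | "a \<in> I" "b \<in> I" by (auto simp: sim_sup_def)
  then show "(a, b) \<in> S"
  proof cases
    case 2
    then have "(a * b, a) \<in> S" "(b * a, b) \<in> S"
      using assms(2) unfolding absorbing_ideal_def by blast+
    then show ?thesis
      using equiv_UNIV_sym[OF assms(1)] equiv_UNIV_trans[OF assms(1)] by (metis mult.commute)
  qed (use equiv_UNIV_refl[OF assms(1)] in simp)
qed

lemma sim_sub_least:
  assumes "congruence_bp R S" and "I \<subseteq> absorbing_ideal S"
  shows "sim_sub R I \<subseteq> S"
proof -
  have eS: "equiv UNIV S" and restrict: "{(a, b). ({#a#}, {#b#}) \<in> sim_R R S} = S"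
    using assms(1) unfolding congruence_bp_def by auto
  have "sim_R R (sim_sup I) \<subseteq> sim_R R S"
    by (intro sim_R_mono lin_ext_mono sim_sup_subset_congruence[OF eS assms(2)])
  then show ?thesis using restrict unfolding sim_sub_def by blast
qed

theorem mainTheorem9:
  fixes R :: "('a::comm_monoid_mult multiset \<times> 'a multiset) set"
    and I :: "'a set"
  assumes "pre_addition R"
    and "bp_ideal R I"
    and "{e. is_absorbing R e} \<subseteq> I"
  shows "congruence_bp R (sim_sub R I)
    \<and> absorbing_ideal (sim_sub R I) = I
    \<and> (\<forall>S. congruence_bp R S \<and> absorbing_ideal S = I \<longrightarrow> sim_sub R I \<subseteq> S)"
proof (intro conjI allI impI)
  have I_mult: "\<And>a b. a \<in> I \<Longrightarrow> a * b \<in> I"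
    using assms(2) unfolding bp_ideal_def by blast
  show "congruence_bp R (sim_sub R I)"
    using assms(1) I_mult by (rule sim_sub_congruence)
  show "absorbing_ideal (sim_sub R I) = I"
    using assms by (rule absorbing_ideal_sim_sub)
  show "sim_sub R I \<subseteq> S" if "congruence_bp R S \<and> absorbing_ideal S = I" for S
    using that sim_sub_least by blast
qed

end
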